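(* Let $n\ge 2$ be a power of $2$, let $f\colon\{0,1\}^n\to\{0,1,*\}$ be a partial function and let $x\in f^{-1}( * )$. Then there exists a total function $g\colon\{0,1\}^{N}\to\{0,1\}$ with $N\le 3n^2\log_2^2 n$ such that \[ \mathrm{C}_0(g)\;\ge\;\min\{\mathrm{C}_{\bar 0}(f,x),\,\mathrm{C}_{\bar 1}(f,x)\}\qquad\text{and}\qquad \mathrm{UC}_1(g)\;\le\;3\,\mathrm{C}(f)\log_2^2 n. \]
   Context: For a partial function $f\colon\{0,1\}^n\to\{0,1,*\}$ (inputs with value $*$ are "undefined"): a partial input $\rho\in\{0,1,*\}^n$ is consistent with $x\in\{0,1\}^n$ if $\rho_i=x_i$ whenever $\rho_i\neq *$; its size $|\rho|$ is the number of non-$*$ entries. For $\Sigma\subseteq\{0,1,*\}$, $\rho$ is a $\Sigma$-certificate for $x$ if $\rho$ is consistent with $x$ and $f(x')\in\Sigma$ for every $x'$ consistent with $\rho$. $\mathrm{C}_\Sigma(f,x)$ is the least size of a $\Sigma$-certificate for $x$, and $\mathrm{C}_\Sigma(f)=\max_{x\in f^{-1}(\Sigma)}\mathrm{C}_\Sigma(f,x)$. We write $0,1,\bar0,\bar1$ for $\Sigma=\{0\},\{1\},\{1,*\},\{0,*\}$ respectively, and $\mathrm{C}(f)=\max\{\mathrm{C}_0(f),\mathrm{C}_1(f)\}$. For a total function $g$, $\mathrm{C}_0(g)$ equals the least $k$ such that $g$ is a width-$k$ CNF, and $\mathrm{UC}_1(g)$ is the least $k$ such that $g$ can be written as an unambiguous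 width-$k$ DNF (a DNF in which every input satisfies at most one term; width = maximum number of literals in a term). *)

theory Defs
  imports Complex_Main
begin

text \<open>Inputs in {0,1}^n are boolean lists of length n (True = 1).
  A partial function f : {0,1}^n -> {0,1,*} is a map  bool list => bool option,
  with None standing for the undefined value *, Some False for 0, Some True for 1;
  only its values on lists of length n matter.
  A partial input rho in {0,1,*}^n is a  bool option list  of length n.\<close>

definition consistent :: "bool option list \<Rightarrow> bool list \<Rightarrow> bool" where
  "consistent \<rho> x \<longleftrightarrow> length \<rho> = length x \<and>
     (\<forall>i < length x. \<rho> ! i \<noteq> None \<longrightarrow> \<rho> ! i = Some (x ! i))"

definition psize :: "bool option list \<Rightarrow> nat" where
  "psize \<rho> = card {i. i < length \<rho> \<and> \<rho> ! i \<noteq> None}"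

definition is_cert ::
  "nat \<Rightarrow> (bool list \<Rightarrow> bool option) \<Rightarrow> bool option set \<Rightarrow> bool option list \<Rightarrow> bool list \<Rightarrow> bool" where
  "is_cert n f \<Sigma> \<rho> x \<longleftrightarrow> length x = n \<and> consistent \<rho> x \<and>
     (\<forall>x'. length x' = n \<longrightarrow> consistent \<rho> x' \<longrightarrow> f x' \<in> \<Sigma>)"

definition C_at ::
  "nat \<Rightarrow> (bool list \<Rightarrow> bool option) \<Rightarrow> bool option set \<Rightarrow> bool list \<Rightarrow> nat" where
  "C_at n f \<Sigma> x = (LEAST k. \<exists>\<rho>. is_cert n f \<Sigma> \<rho> x \<and> psize \<rho> = k)"

text \<open>C_Sigma(f) = max over x in f^{-1}(Sigma) (max of the empty set taken as 0).\<close>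
definition C_fun ::
  "nat \<Rightarrow> (bool list \<Rightarrow> bool option) \<Rightarrow> bool option set \<Rightarrow> nat" where
  "C_fun n f \<Sigma> = Max (insert 0 {C_at n f \<Sigma> x | x. length x = n \<and> f x \<in> \<Sigma>})"

abbreviation Sig0 :: "bool option set" where "Sig0 \<equiv> {Some False}"
abbreviation Sig1 :: "bool option set" where "Sig1 \<equiv> {Some True}"
abbreviation Sigbar0 :: "bool option set" where "Sigbar0 \<equiv> {Some True, None}"
abbreviation Sigbar1 :: "bool option set" where "Sigbar1 \<equiv> {Some False, None}"

definition C_total :: "nat \<Rightarrow> (bool list \<Rightarrow> bool option) \<Rightarrow> nat" where
  "C_total n f = max (C_fun n f Sig0) (C_fun n f Sig1)"

definition C0_total :: "nat \<Rightarrow> (bool list \<Rightarrow> bool) \<Rightarrow> nat" where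
  "C0_total N g = C_fun N (\<lambda>x. Some (g x)) Sig0"

text \<open>Unambiguous DNF over N variables: a finite set of terms (partial inputs of
  length N; a term is satisfied by x iff it is consistent with x); width = max term size.\<close>
definition is_unamb_dnf ::
  "nat \<Rightarrow> (bool list \<Rightarrow> bool) \<Rightarrow> bool option list set \<Rightarrow> nat \<Rightarrow> bool" where
  "is_unamb_dnf N g T k \<longleftrightarrow> finite T \<and> (\<forall>t\<in>T. length t = N \<and> psize t \<le> k) \<and>
     (\<forall>x. length x = N \<longrightarrow> (g x \<longleftrightarrow> (\<exists>t\<in>T. consistent t x))) \<and>
     (\<forall>x. length x = N \<longrightarrow> (\<forall>t1\<in>T. \<forall>t2\<in>T. consistent t1 x \<longrightarrow> consistent t2 x \<longrightarrow> t1 = t2))"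

definition UC1 :: "nat \<Rightarrow> (bool list \<Rightarrow> bool) \<Rightarrow> nat" where
  "UC1 N g = (LEAST k. \<exists>T. is_unamb_dnf N g T k)"

end

theory Submission
  imports Defs
begin

text \<open>Let \<open>k = log n\<close> and \<open>c = C(f)\<close>. An input of \<open>g\<close> consists of \<open>k\<close> copies of an input of
  \<open>f\<close> followed by \<open>n\<close> pointer blocks, one for each \<open>b < n\<close>; block \<open>b\<close> holds, for every copy
  \<open>i\<close>, \<open>c\<close> pointers of \<open>k\<close> bits each. A term of the DNF fixes block \<open>b\<close> to pointers
  \<open>P\<close> and, in every copy \<open>i\<close>, the \<open>c\<close> positions \<open>P i _\<close> to values that force \<open>f\<close> to
  bit \<open>i\<close> of \<open>b\<close>. Such a term has width \<open>kc + k\<^sup>2c\<close>, and the terms are mutually exclusive: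
  the copies determine \<open>b\<close>, block \<open>b\<close> determines the pointers, and these determine the term.

  For the lower bound, put \<open>x\<close> into every copy; as \<open>f x = *\<close>, \<open>g\<close> is \<open>0\<close> there. A
  \<open>0\<close>-certificate of size below both \<open>C_at n f Sigbar0 x\<close> and \<open>C_at n f Sigbar1 x\<close> (each
  at most \<open>n\<close>) leaves some block \<open>b\<close> unread, and its restriction to copy \<open>i\<close> certifies
  neither \<open>Sigbar0\<close> nor \<open>Sigbar1\<close>, so it extends to an input of \<open>f\<close> with value bit \<open>i\<close>
  of \<open>b\<close>. Writing certificates of these inputs into block \<open>b\<close> yields a term compatible with
  the \<open>0\<close>-certificate, a contradiction.\<close>

lemma ex_less_notin_image:
  fixes h :: "'a \<Rightarrow> nat"
  assumes "finite S" "card S < n"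
  obtains b where "b < n" "b \<notin> h ` S"
proof -
  have "\<not> {..<n} \<subseteq> h ` S"
  proof
    assume "{..<n} \<subseteq> h ` S"
    then have "n \<le> card (h ` S)"
      using card_mono[OF finite_imageI[OF assms(1)]] by fastforce
    then show False
      using card_image_le[OF assms(1), of h] assms(2) by linarith
  qed
  then show ?thesis
    using that by blast
qed

lemma nat_eq_if_low_bits_eq:
  fixes u v :: nat
  assumes "u < 2 ^ k" "v < 2 ^ k" "\<forall>r<k. bit u r = bit v r"
  shows "u = v"
proof -
  have "take_bit k u = u" "take_bit k v = v"
    using assms(1,2) by (simp_all add: take_bit_nat_eq_self_iff)
  then show ?thesis
    using assms(3) by (metis bit_eq_iff bit_take_bit_iff)
qed

lemma consistentD:
  "consistent \<rho> x \<Longrightarrow> j < length x \<Longrightarrow> \<rho> ! j \<noteq> None \<Longrightarrow> \<rho> ! j = Some (x ! j)"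
  unfolding consistent_def by auto

lemma consistent_nth_Some: "consistent \<rho> z \<Longrightarrow> j < length \<rho> \<Longrightarrow> \<rho> ! j = Some v \<Longrightarrow> z ! j = v"
  unfolding consistent_def by auto

lemma consistent_map_Some_iff: "consistent (map Some y) x \<longleftrightarrow> x = y"
  unfolding consistent_def by (auto intro: nth_equalityI)

lemma consistent_eq_if_same_support:
  assumes "consistent \<rho> z" "consistent \<tau> z"
    and "\<forall>j<length z. \<rho> ! j = None \<longleftrightarrow> \<tau> ! j = None"
  shows "\<rho> = \<tau>"
proof (rule nth_equalityI)
  show "length \<rho> = length \<tau>"
    using assms(1,2) by (simp add: consistent_def)
  fix j assume "j < length \<rho>"
  then have "j < length z"
    using assms(1) by (simp add: consistent_def)
  then show "\<rho> ! j = \<tau> ! j"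
    using assms consistentD[OF assms(1)] consistentD[OF assms(2)] by (cases "\<rho> ! j") auto
qed

lemma consistent_common_extension:
  assumes "length \<rho> = length \<tau>"
    and "\<forall>j<length \<rho>. \<rho> ! j = None \<or> \<tau> ! j = None \<or> \<rho> ! j = \<tau> ! j"
  obtains z where "consistent \<rho> z" "consistent \<tau> z"
proof
  define z where "z = map (\<lambda>j. case \<rho> ! j of Some v \<Rightarrow> v
      | None \<Rightarrow> (case \<tau> ! j of Some v \<Rightarrow> v | None \<Rightarrow> False)) [0..<length \<rho>]"
  show "consistent \<rho> z" "consistent \<tau> z"
    using assms by (auto simp: consistent_def z_def split: option.splits)
qed

lemma psize_map_upt: "psize (map h [0..<N]) = card {j. j < N \<and> h j \<noteq> None}"
  unfolding psize_def by (rule arg_cong[where f = card]) auto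

lemma psize_map_Some: "psize (map Some y) = length y"
proof -
  have "{i. i < length (map Some y) \<and> map Some y ! i \<noteq> None} = {..<length y}"
    by auto
  then show ?thesis
    by (simp add: psize_def)
qed

lemma is_cert_map_Some:
  "length y = n \<Longrightarrow> f y \<in> \<Sigma> \<Longrightarrow> is_cert n f \<Sigma> (map Some y) y"
  by (auto simp: is_cert_def consistent_map_Some_iff)

lemma C_at_le_psize: "is_cert n f \<Sigma> \<rho> y \<Longrightarrow> C_at n f \<Sigma> y \<le> psize \<rho>"
  unfolding C_at_def by (metis (mono_tags, lifting) Least_le)

lemma C_at_le_length: "length y = n \<Longrightarrow> f y \<in> \<Sigma> \<Longrightarrow> C_at n f \<Sigma> y \<le> n"
  using C_at_le_psize[OF is_cert_map_Some, of y n f \<Sigma>] psize_map_Some by metis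

lemma C_at_minimal_cert:
  assumes "length y = n" "f y \<in> \<Sigma>"
  obtains \<rho> where "is_cert n f \<Sigma> \<rho> y" "psize \<rho> = C_at n f \<Sigma> y"
proof -
  have "\<exists>\<rho>. is_cert n f \<Sigma> \<rho> y \<and> psize \<rho> = psize (map Some y)"
    using is_cert_map_Some assms by blast
  then show ?thesis
    using that LeastI_ex[of "\<lambda>k. \<exists>\<rho>. is_cert n f \<Sigma> \<rho> y \<and> psize \<rho> = k"]
    unfolding C_at_def by blast
qed

lemma ex_consistent_outside_if_psize_less:
  assumes "length x = n" "consistent \<rho> x" "psize \<rho> < C_at n f \<Sigma> x"
  obtains x' where "length x' = n" "consistent \<rho> x'" "f x' \<notin> \<Sigma>"
  using assms C_at_le_psize[of n f \<Sigma> \<rho> x] unfolding is_cert_def by fastforce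

lemma finite_C_at_values: "finite (insert 0 {C_at n f \<Sigma> x | x. length x = n \<and> f x \<in> \<Sigma>})"
  by (rule finite_subset[of _ "{..n}"]) (use C_at_le_length in auto)

lemma C_at_le_C_fun: "length y = n \<Longrightarrow> f y \<in> \<Sigma> \<Longrightarrow> C_at n f \<Sigma> y \<le> C_fun n f \<Sigma>"
  unfolding C_fun_def by (rule Max_ge[OF finite_C_at_values]) auto

lemma C_fun_le_length: "C_fun n f \<Sigma> \<le> n"
  unfolding C_fun_def by (rule Max.boundedI[OF finite_C_at_values]) (use C_at_le_length in auto)

definition forces ::
  "nat \<Rightarrow> (bool list \<Rightarrow> bool option) \<Rightarrow> nat set \<Rightarrow> bool list \<Rightarrow> bool \<Rightarrow> bool" where
  "forces n f S y v \<longleftrightarrow> (\<forall>x'. length x' = n \<longrightarrow> (\<forall>p\<in>S. x' ! p = y ! p) \<longrightarrow> f x' = Some v)"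

lemma forces_mono: "forces n f S y v \<Longrightarrow> S \<subseteq> S' \<Longrightarrow> forces n f S' y v"
  unfolding forces_def by blast

lemma forces_support_of_cert:
  assumes "is_cert n f {Some v} \<rho> y"
  shows "forces n f {p. p < length \<rho> \<and> \<rho> ! p \<noteq> None} y v"
  unfolding forces_def
proof (intro allI impI)
  fix x' assume x': "length x' = n" "\<forall>p\<in>{p. p < length \<rho> \<and> \<rho> ! p \<noteq> None}. x' ! p = y ! p"
  have "consistent \<rho> y" "length y = n"
    using assms by (simp_all add: is_cert_def)
  then have "consistent \<rho> x'"
    using x' consistentD[of \<rho> y] by (auto simp: consistent_def)
  then show "f x' = Some v"
    using assms x'(1) by (simp add: is_cert_def)
qed

lemma small_forcing_set:
  assumes "length y = n" "f y = Some v"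
  obtains S where "S \<subseteq> {..<n}" "card S \<le> C_total n f" "forces n f S y v"
proof -
  obtain \<rho> where \<rho>: "is_cert n f {Some v} \<rho> y" "psize \<rho> = C_at n f {Some v} y"
    using C_at_minimal_cert[of y n f "{Some v}"] assms by auto
  have "length \<rho> = n"
    using \<rho>(1) by (simp add: is_cert_def consistent_def)
  moreover have "psize \<rho> \<le> C_total n f"
    using \<rho>(2) C_at_le_C_fun[of y n f "{Some v}"] assms
    by (cases v) (simp_all add: C_total_def)
  ultimately show ?thesis
    using that[of "{p. p < length \<rho> \<and> \<rho> ! p \<noteq> None}"] forces_support_of_cert[OF \<rho>(1)]
    unfolding psize_def by auto
qed

lemma subset_image_lessThan:
  fixes S :: "nat set"
  assumes "S \<subseteq> {..<n}" "card S \<le> c" "0 < n"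
  obtains Q where "\<forall>e<c. Q e < n" "S \<subseteq> Q ` {..<c}"
proof -
  have "finite S"
    using assms(1) by (rule finite_subset) simp
  then obtain h where h: "bij_betw h {0..<card S} S"
    using ex_bij_betw_nat_finite by blast
  define Q where "Q e = (if e < card S then h e else 0)" for e
  have "\<forall>e<c. Q e < n"
  proof (intro allI impI)
    fix e assume "e < c"
    show "Q e < n"
    proof (cases "e < card S")
      case True
      then have "h e \<in> S"
        using bij_betw_apply[OF h] by simp
      then show ?thesis
        using True assms(1) by (auto simp: Q_def)
    qed (simp add: Q_def assms(3))
  qed
  moreover have "S \<subseteq> Q ` {..<c}"
  proof
    fix p assume "p \<in> S"
    then obtain e where "e < card S" "p = h e"
      using bij_betw_imp_surj_on[OF h] by (metis atLeastLessThan_iff imageE)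
    then have "Q e = p" "e < c"
      using assms(2) by (simp_all add: Q_def)
    then show "p \<in> Q ` {..<c}"
      by blast
  qed
  ultimately show ?thesis
    using that by blast
qed

lemma small_partial_input_extends_to_forcing:
  assumes "length x = n" "consistent \<rho> x" "f x = None"
    and "psize \<rho> < C_at n f Sigbar0 x" "psize \<rho> < C_at n f Sigbar1 x" "C_total n f \<le> c"
  obtains y Q where "length y = n" "consistent \<rho> y" "\<forall>e<c. Q e < n" "forces n f (Q ` {..<c}) y v"
proof -
  obtain y where y: "length y = n" "consistent \<rho> y" "f y = Some v"
  proof (cases v)
    case True
    obtain y where "length y = n" "consistent \<rho> y" "f y \<notin> Sigbar1"
      using ex_consistent_outside_if_psize_less[OF assms(1,2,5)] .
    moreover from this(3) True have "f y = Some v"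
      by (cases "f y") auto
    ultimately show ?thesis
      using that by blast
  next
    case False
    obtain y where "length y = n" "consistent \<rho> y" "f y \<notin> Sigbar0"
      using ex_consistent_outside_if_psize_less[OF assms(1,2,4)] .
    moreover from this(3) False have "f y = Some v"
      by (cases "f y") auto
    ultimately show ?thesis
      using that by blast
  qed
  obtain S where S: "S \<subseteq> {..<n}" "card S \<le> C_total n f" "forces n f S y v"
    using small_forcing_set[of y n f v] y(1,3) by blast
  have "0 < n"
    using assms(1,3,4) C_at_le_length[of x n f Sigbar0] by simp
  moreover have "card S \<le> c"
    using S(2) assms(6) by simp
  ultimately obtain Q where Q: "\<forall>e<c. Q e < n" "S \<subseteq> Q ` {..<c}"
    using subset_image_lessThan[OF S(1)] by blast
  show ?thesis
    by (rule that[OF y(1,2) Q(1) forces_mono[OF S(3) Q(2)]])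
qed

definition block :: "'a list \<Rightarrow> nat \<Rightarrow> nat \<Rightarrow> 'a list" where
  "block xs n i = map (\<lambda>p. xs ! (i * n + p)) [0..<n]"

lemma length_block [simp]: "length (block xs n i) = n"
  by (simp add: block_def)

lemma nth_block [simp]: "p < n \<Longrightarrow> block xs n i ! p = xs ! (i * n + p)"
  by (simp add: block_def)

lemma block_end_le:
  fixes i k n :: nat
  assumes "i < k"
  shows "i * n + n \<le> k * n"
proof -
  have "Suc i * n \<le> k * n"
    using assms by (intro mult_le_mono1) simp
  then show ?thesis
    by simp
qed

lemma consistent_block:
  assumes "consistent \<rho> z" "i * n + n \<le> length z"
  shows "consistent (block \<rho> n i) (block z n i)"
  using assms consistentD[OF assms(1)] by (auto simp: consistent_def)

lemma psize_block_le:
  assumes "i * n + n \<le> length \<rho>"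
  shows "psize (block \<rho> n i) \<le> psize \<rho>"
proof -
  have "inj_on (\<lambda>p. i * n + p) {p. p < n \<and> block \<rho> n i ! p \<noteq> None}"
    by (simp add: inj_on_def)
  moreover have "(\<lambda>p. i * n + p) ` {p. p < n \<and> block \<rho> n i ! p \<noteq> None}
      \<subseteq> {j. j < length \<rho> \<and> \<rho> ! j \<noteq> None}"
    using assms by auto
  ultimately show ?thesis
    unfolding psize_def by (intro card_inj_on_le) simp_all
qed

text \<open>Layout of an input of \<open>g\<close>: position \<open>i * n + p\<close> is bit \<open>p\<close> of copy \<open>i < k\<close>, and
  \<open>ptr_bit_pos n k c b i e r\<close> is bit \<open>r < k\<close> of the \<open>e\<close>-th pointer (\<open>e < c\<close>) into copy \<open>i\<close>
  stored in block \<open>b < n\<close>.\<close>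

definition ptr_len :: "nat \<Rightarrow> nat \<Rightarrow> nat \<Rightarrow> nat" where
  "ptr_len n k c = k * n + n * (k * c * k)"

definition ptr_bit_pos :: "nat \<Rightarrow> nat \<Rightarrow> nat \<Rightarrow> nat \<Rightarrow> nat \<Rightarrow> nat \<Rightarrow> nat \<Rightarrow> nat" where
  "ptr_bit_pos n k c b i e r = k * n + (b * (k * c * k) + (i * (c * k) + (e * k + r)))"

lemma mult_add_less_mult:
  fixes a m r k :: nat
  assumes "a < m" "r < k"
  shows "a * k + r < m * k"
proof -
  have "a * k + r < Suc a * k"
    using assms(2) by simp
  also have "\<dots> \<le> m * k"
    using assms(1) by (intro mult_le_mono1) simp
  finally show ?thesis .
qed

lemma ptr_bit_pos_decode:
  assumes "b < n" "i < k" "e < c" "r < k"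
  defines "j \<equiv> ptr_bit_pos n k c b i e r"
  shows "k * n \<le> j" "j < ptr_len n k c" "(j - k * n) div (k * c * k) = b"
    "(j - k * n) mod (k * c * k) div (c * k) = i" "(j - k * n) mod (c * k) div k = e"
    "(j - k * n) mod k = r"
proof -
  have er: "e * k + r < c * k"
    using mult_add_less_mult[OF assms(3,4)] .
  have ier: "i * (c * k) + (e * k + r) < k * c * k"
    using mult_add_less_mult[OF assms(2) er] by (simp add: mult.assoc)
  have j: "j - k * n = b * (k * c * k) + (i * (c * k) + (e * k + r))"
    by (simp add: j_def ptr_bit_pos_def)
  show "k * n \<le> j"
    by (simp add: j_def ptr_bit_pos_def)
  show "j < ptr_len n k c"
    using mult_add_less_mult[OF assms(1) ier] by (simp add: j_def ptr_bit_pos_def ptr_len_def mult.commute)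
  have "0 < c * k" "0 < k * c * k"
    using er ier by linarith+
  then show "(j - k * n) div (k * c * k) = b" "(j - k * n) mod (k * c * k) div (c * k) = i"
    using ier er by (simp_all add: j)
  have "j - k * n = (b * k + i) * (c * k) + (e * k + r)"
    by (simp add: j algebra_simps)
  then show "(j - k * n) mod (c * k) div k = e"
    using er assms(4) by simp
  have "j - k * n = (b * k * c + i * c + e) * k + r"
    by (simp add: j algebra_simps)
  then show "(j - k * n) mod k = r"
    using assms(4) by simp
qed

definition ptr_entry ::
  "nat \<Rightarrow> nat \<Rightarrow> nat \<Rightarrow> nat \<Rightarrow> (nat \<Rightarrow> nat \<Rightarrow> nat) \<Rightarrow> (nat \<Rightarrow> bool list) \<Rightarrow> nat \<Rightarrow> bool option" where
  "ptr_entry n k c b P w j =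
    (if j < k * n then
       (if j mod n \<in> P (j div n) ` {..<c} then Some (w (j div n) ! (j mod n)) else None)
     else if (j - k * n) div (k * c * k) = b then
       Some (bit (P ((j - k * n) mod (k * c * k) div (c * k)) ((j - k * n) mod (c * k) div k))
              ((j - k * n) mod k))
     else None)"

definition ptr_term ::
  "nat \<Rightarrow> nat \<Rightarrow> nat \<Rightarrow> nat \<Rightarrow> (nat \<Rightarrow> nat \<Rightarrow> nat) \<Rightarrow> (nat \<Rightarrow> bool list) \<Rightarrow> bool option list" where
  "ptr_term n k c b P w = map (ptr_entry n k c b P w) [0..<ptr_len n k c]"

definition valid_ptr_term ::
  "nat \<Rightarrow> nat \<Rightarrow> nat \<Rightarrow> (bool list \<Rightarrow> bool option) \<Rightarrow> nat \<Rightarrow> (nat \<Rightarrow> nat \<Rightarrow> nat) \<Rightarrow> (nat \<Rightarrow> bool list) \<Rightarrow> bool" where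
  "valid_ptr_term n k c f b P w \<longleftrightarrow> b < n \<and>
     (\<forall>i<k. (\<forall>e<c. P i e < n) \<and> forces n f (P i ` {..<c}) (w i) (bit b i))"

definition ptr_terms :: "nat \<Rightarrow> nat \<Rightarrow> nat \<Rightarrow> (bool list \<Rightarrow> bool option) \<Rightarrow> bool option list set" where
  "ptr_terms n k c f = {ptr_term n k c b P w | b P w. valid_ptr_term n k c f b P w}"

definition ptr_fun :: "nat \<Rightarrow> nat \<Rightarrow> nat \<Rightarrow> (bool list \<Rightarrow> bool option) \<Rightarrow> bool list \<Rightarrow> bool" where
  "ptr_fun n k c f z \<longleftrightarrow> (\<exists>t\<in>ptr_terms n k c f. consistent t z)"

lemma length_ptr_term [simp]: "length (ptr_term n k c b P w) = ptr_len n k c"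
  by (simp add: ptr_term_def)

lemma nth_ptr_term: "j < ptr_len n k c \<Longrightarrow> ptr_term n k c b P w ! j = ptr_entry n k c b P w j"
  by (simp add: ptr_term_def)

lemma copy_pos_lt_ptr_len:
  fixes i p :: nat
  assumes "i < k" "p < n"
  shows "i * n + p < k * n" "i * n + p < ptr_len n k c"
proof -
  show "i * n + p < k * n"
    using mult_add_less_mult[OF assms] by (simp add: mult.commute)
  then show "i * n + p < ptr_len n k c"
    by (simp add: ptr_len_def)
qed

lemma ptr_entry_copy:
  assumes "i < k" "e < c" "P i e < n"
  shows "ptr_entry n k c b P w (i * n + P i e) = Some (w i ! P i e)"
  using copy_pos_lt_ptr_len(1)[OF assms(1,3)] assms by (auto simp: ptr_entry_def)

lemma ptr_entry_pointer:
  assumes "b < n" "i < k" "e < c" "r < k"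
  shows "ptr_entry n k c b P w (ptr_bit_pos n k c b i e r) = Some (bit (P i e) r)"
  using ptr_bit_pos_decode[OF assms] by (simp add: ptr_entry_def)

lemma block_forced_by_ptr_term:
  assumes "valid_ptr_term n k c f b P w" "i < k" "consistent (ptr_term n k c b P w) z"
  shows "f (block z n i) = Some (bit b i)"
proof -
  have agree: "block z n i ! p = w i ! p" if p: "p \<in> P i ` {..<c}" for p
  proof -
    obtain e where e: "e < c" "p = P i e"
      using p by blast
    then have "p < n"
      using assms(1,2) by (simp add: valid_ptr_term_def)
    then show ?thesis
      using consistent_nth_Some[OF assms(3)] ptr_entry_copy[OF assms(2) e(1)] e
        copy_pos_lt_ptr_len(2)[OF assms(2)] by (simp add: nth_ptr_term)
  qed
  have "forces n f (P i ` {..<c}) (w i) (bit b i)"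
    using assms(1,2) by (simp add: valid_ptr_term_def)
  then show ?thesis
    unfolding forces_def using agree length_block by blast
qed

lemma pointer_bit_by_ptr_term:
  assumes "valid_ptr_term n k c f b P w" "i < k" "e < c" "r < k"
    and "consistent (ptr_term n k c b P w) z"
  shows "z ! ptr_bit_pos n k c b i e r = bit (P i e) r"
proof -
  have "b < n"
    using assms(1) by (simp add: valid_ptr_term_def)
  then show ?thesis
    using consistent_nth_Some[OF assms(5)] ptr_entry_pointer[of b n i k e c r P w]
      ptr_bit_pos_decode(2)[of b n i k e c r] assms(2-4) by (simp add: nth_ptr_term)
qed

lemma ptr_entry_eq_None_cong:
  assumes "\<forall>i<k. \<forall>e<c. P i e = P' i e"
  shows "ptr_entry n k c b P w j = None \<longleftrightarrow> ptr_entry n k c b P' w' j = None"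
proof (cases "j < k * n")
  case True
  then have "P (j div n) ` {..<c} = P' (j div n) ` {..<c}"
    using assms less_mult_imp_div_less by (intro image_cong) auto
  then show ?thesis
    using True by (simp add: ptr_entry_def)
qed (simp add: ptr_entry_def)

lemma ptr_term_unique:
  assumes "n = 2 ^ k"
    and "valid_ptr_term n k c f b P w" "consistent (ptr_term n k c b P w) z"
    and "valid_ptr_term n k c f b' P' w'" "consistent (ptr_term n k c b' P' w') z"
  shows "ptr_term n k c b P w = ptr_term n k c b' P' w'"
proof -
  have "\<forall>i<k. bit b i = bit b' i"
    using block_forced_by_ptr_term[OF assms(2) _ assms(3)] block_forced_by_ptr_term[OF assms(4) _ assms(5)]
    by (metis option.inject)
  moreover have "b < 2 ^ k" "b' < 2 ^ k"
    using assms(1,2,4) by (simp_all add: valid_ptr_term_def)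
  ultimately have b: "b' = b"
    using nat_eq_if_low_bits_eq[of b' k b] by simp
  have P: "\<forall>i<k. \<forall>e<c. P i e = P' i e"
  proof (intro allI impI)
    fix i e assume ie: "i < k" "e < c"
    have "\<forall>r<k. bit (P i e) r = bit (P' i e) r"
      using pointer_bit_by_ptr_term[OF assms(2) ie _ assms(3)]
        pointer_bit_by_ptr_term[OF assms(4) ie _ assms(5)] b by simp
    moreover have "P i e < 2 ^ k" "P' i e < 2 ^ k"
      using assms(1,2,4) ie by (simp_all add: valid_ptr_term_def)
    ultimately show "P i e = P' i e"
      using nat_eq_if_low_bits_eq[of "P i e" k "P' i e"] by simp
  qed
  have "length z = ptr_len n k c"
    using assms(3) by (simp add: consistent_def)
  then show ?thesis
    using b ptr_entry_eq_None_cong[OF P]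
    by (intro consistent_eq_if_same_support[OF assms(3,5)]) (simp add: nth_ptr_term)
qed

lemma ptr_entry_support_subset:
  "{j. j < ptr_len n k c \<and> ptr_entry n k c b P w j \<noteq> None}
    \<subseteq> (\<lambda>(i, e). i * n + P i e) ` ({..<k} \<times> {..<c}) \<union>
      {k * n + b * (k * c * k)..<k * n + b * (k * c * k) + k * c * k}"
    (is "_ \<subseteq> ?A \<union> ?B")
proof
  fix j assume "j \<in> {j. j < ptr_len n k c \<and> ptr_entry n k c b P w j \<noteq> None}"
  then have j: "j < ptr_len n k c" "ptr_entry n k c b P w j \<noteq> None"
    by simp_all
  show "j \<in> ?A \<union> ?B"
  proof (cases "j < k * n")
    case True
    then obtain e where "e < c" "j mod n = P (j div n) e"
      using j(2) by (auto simp: ptr_entry_def split: if_splits)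
    moreover have "j div n < k"
      using True less_mult_imp_div_less by blast
    moreover have "j = (j div n) * n + j mod n"
      by simp
    ultimately have "(j div n, e) \<in> {..<k} \<times> {..<c}" "j = (j div n) * n + P (j div n) e"
      by simp_all
    then show ?thesis
      by force
  next
    case False
    define W where "W = k * c * k"
    have b: "(j - k * n) div W = b"
      using False j(2) by (simp add: ptr_entry_def W_def split: if_splits)
    have "0 < n * W"
      using j(1) False unfolding ptr_len_def W_def by linarith
    then have "b * W \<le> j - k * n" "j - k * n < b * W + W"
      using b div_times_less_eq_dividend[of "j - k * n" W] dividend_less_div_times[of W "j - k * n"]
      by simp_all
    then show ?thesis
      using False unfolding W_def Un_iff atLeastLessThan_iff by linarith
  qed
qed

lemma psize_ptr_term_le: "psize (ptr_term n k c b P w) \<le> k * c + k * c * k"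
proof -
  let ?A = "(\<lambda>(i, e). i * n + P i e) ` ({..<k} \<times> {..<c})"
  let ?B = "{k * n + b * (k * c * k)..<k * n + b * (k * c * k) + k * c * k}"
  have "psize (ptr_term n k c b P w) \<le> card (?A \<union> ?B)"
    unfolding ptr_term_def psize_map_upt by (intro card_mono ptr_entry_support_subset) simp
  also have "\<dots> \<le> card ?A + card ?B"
    by (rule card_Un_le)
  also have "\<dots> \<le> k * c + k * c * k"
    using card_image_le[of "{..<k} \<times> {..<c}"] by (simp add: card_cartesian_product)
  finally show ?thesis .
qed

lemma UC1_ptr_fun_le:
  assumes "n = 2 ^ k"
  shows "UC1 (ptr_len n k c) (ptr_fun n k c f) \<le> k * c + k * c * k"
proof -
  have "finite {t :: bool option list. set t \<subseteq> UNIV \<and> length t = ptr_len n k c}"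
    by (rule finite_lists_length_eq) simp
  then have "finite (ptr_terms n k c f)"
    by (rule rev_finite_subset) (auto simp: ptr_terms_def)
  then have "is_unamb_dnf (ptr_len n k c) (ptr_fun n k c f) (ptr_terms n k c f) (k * c + k * c * k)"
    using psize_ptr_term_le ptr_term_unique[OF assms]
    by (auto simp: is_unamb_dnf_def ptr_fun_def ptr_terms_def)
  then show ?thesis
    unfolding UC1_def by (metis (mono_tags, lifting) Least_le)
qed

definition padded_copies :: "nat \<Rightarrow> nat \<Rightarrow> nat \<Rightarrow> bool list \<Rightarrow> bool list" where
  "padded_copies n k c x = map (\<lambda>j. if j < k * n then x ! (j mod n) else False) [0..<ptr_len n k c]"

lemma length_padded_copies [simp]: "length (padded_copies n k c x) = ptr_len n k c"
  by (simp add: padded_copies_def)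

lemma block_padded_copies:
  assumes "i < k" "length x = n"
  shows "block (padded_copies n k c x) n i = x"
  using assms copy_pos_lt_ptr_len[OF assms(1)] by (intro nth_equalityI) (simp_all add: padded_copies_def)

lemma block_of_consistent_padded_copies:
  assumes "consistent \<rho> (padded_copies n k c x)" "length x = n" "i < k"
  shows "consistent (block \<rho> n i) x" "psize (block \<rho> n i) \<le> psize \<rho>"
proof -
  have "i * n + n \<le> length \<rho>"
    using block_end_le[OF assms(3), of n] assms(1) by (simp add: consistent_def ptr_len_def)
  then show "consistent (block \<rho> n i) x" "psize (block \<rho> n i) \<le> psize \<rho>"
    using consistent_block[OF assms(1), of i n] block_padded_copies[OF assms(3,2)] psize_block_le assms(1)
    by (simp_all add: consistent_def)
qed

lemma not_ptr_fun_padded_copies: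
  assumes "0 < k" "length x = n" "f x = None"
  shows "\<not> ptr_fun n k c f (padded_copies n k c x)"
  using block_forced_by_ptr_term[OF _ assms(1)] block_padded_copies[OF assms(1,2)] assms(3)
  by (fastforce simp: ptr_fun_def ptr_terms_def)

lemma ptr_term_compatible:
  assumes "length \<rho> = ptr_len n k c"
    and unread: "\<forall>j<length \<rho>. k * n \<le> j \<longrightarrow> \<rho> ! j \<noteq> None \<longrightarrow> (j - k * n) div (k * c * k) \<noteq> b"
    and copies: "\<forall>i<k. consistent (block \<rho> n i) (w i)"
  shows "\<forall>j<length \<rho>. \<rho> ! j = None \<or> ptr_term n k c b P w ! j = None \<or> \<rho> ! j = ptr_term n k c b P w ! j"
proof (intro allI impI)
  fix j assume j: "j < length \<rho>"
  show "\<rho> ! j = None \<or> ptr_term n k c b P w ! j = None \<or> \<rho> ! j = ptr_term n k c b P w ! j"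
  proof (cases "j < k * n")
    case True
    define i p where "i = j div n" and "p = j mod n"
    have "0 < n"
      using True by (cases "n = 0") auto
    then have i: "i < k" and p: "p < n" and ip: "j = i * n + p"
      using True less_mult_imp_div_less[of j k n] by (auto simp: i_def p_def)
    have "\<rho> ! j = block \<rho> n i ! p"
      using p ip by simp
    moreover have "length (w i) = n"
      using copies i by (simp add: consistent_def)
    ultimately have "\<rho> ! j = None \<or> \<rho> ! j = Some (w i ! p)"
      using consistentD[OF copies[rule_format, OF i], of p] p by metis
    moreover have "ptr_term n k c b P w ! j = None \<or> ptr_term n k c b P w ! j = Some (w i ! p)"
      using True j assms(1) by (auto simp: nth_ptr_term ptr_entry_def i_def p_def)
    ultimately show ?thesis
      by auto
  next
    case False
    then show ?thesis
      using unread j assms(1) by (auto simp: nth_ptr_term ptr_entry_def)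
  qed
qed

lemma ex_unread_block:
  assumes "psize \<rho> < n"
  obtains b where "b < n" "\<forall>j<length \<rho>. k * n \<le> j \<longrightarrow> \<rho> ! j \<noteq> None \<longrightarrow> (j - k * n) div W \<noteq> b"
proof -
  have "finite {j. j < length \<rho> \<and> \<rho> ! j \<noteq> None}"
    by simp
  then obtain b where "b < n" "b \<notin> (\<lambda>j. (j - k * n) div W) ` {j. j < length \<rho> \<and> \<rho> ! j \<noteq> None}"
    using ex_less_notin_image assms unfolding psize_def by blast
  then show ?thesis
    using that by blast
qed

lemma ex_forcing_extensions:
  assumes x: "length x = n" "f x = None" and c: "C_total n f \<le> c"
    and small: "\<And>i. i < k \<Longrightarrow> consistent (\<sigma> i) x \<and>
      psize (\<sigma> i) < C_at n f Sigbar0 x \<and> psize (\<sigma> i) < C_at n f Sigbar1 x"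
  obtains Y P where "\<And>i. i < k \<Longrightarrow> length (Y i) = n \<and> consistent (\<sigma> i) (Y i) \<and>
    (\<forall>e<c. P i e < n) \<and> forces n f (P i ` {..<c}) (Y i) (v i)"
proof -
  have "\<forall>i. \<exists>y Q. i < k \<longrightarrow> length y = n \<and> consistent (\<sigma> i) y \<and>
      (\<forall>e<c. Q e < n) \<and> forces n f (Q ` {..<c}) y (v i)"
  proof (intro allI)
    fix i
    show "\<exists>y Q. i < k \<longrightarrow> length y = n \<and> consistent (\<sigma> i) y \<and>
      (\<forall>e<c. Q e < n) \<and> forces n f (Q ` {..<c}) y (v i)"
      using small_partial_input_extends_to_forcing[OF x(1) _ x(2) _ _ c] small by metis
  qed
  then obtain Y where "\<forall>i. \<exists>Q. i < k \<longrightarrow> length (Y i) = n \<and> consistent (\<sigma> i) (Y i) \<and>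
      (\<forall>e<c. Q e < n) \<and> forces n f (Q ` {..<c}) (Y i) (v i)"
    by (metis choice)
  then obtain P where "\<forall>i. i < k \<longrightarrow> length (Y i) = n \<and> consistent (\<sigma> i) (Y i) \<and>
      (\<forall>e<c. P i e < n) \<and> forces n f (P i ` {..<c}) (Y i) (v i)"
    by (metis choice)
  then show ?thesis
    using that by blast
qed

lemma min_C_bar_le_psize_zero_cert:
  assumes x: "length x = n" "f x = None" and c: "C_total n f \<le> c"
    and cert: "is_cert (ptr_len n k c) (\<lambda>z. Some (ptr_fun n k c f z)) Sig0 \<rho> (padded_copies n k c x)"
  shows "min (C_at n f Sigbar0 x) (C_at n f Sigbar1 x) \<le> psize \<rho>"
proof (rule ccontr)
  assume "\<not> ?thesis"
  then have small: "psize \<rho> < C_at n f Sigbar0 x" "psize \<rho> < C_at n f Sigbar1 x"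
    by auto
  have \<rho>: "consistent \<rho> (padded_copies n k c x)" "length \<rho> = ptr_len n k c"
    using cert by (simp_all add: is_cert_def consistent_def)
  have "psize \<rho> < n"
    using small(1) C_at_le_length[OF x(1), of f Sigbar0] x(2) by simp
  then obtain b where b: "b < n"
    "\<forall>j<length \<rho>. k * n \<le> j \<longrightarrow> \<rho> ! j \<noteq> None \<longrightarrow> (j - k * n) div (k * c * k) \<noteq> b"
    by (rule ex_unread_block)
  have "consistent (block \<rho> n i) x \<and>
      psize (block \<rho> n i) < C_at n f Sigbar0 x \<and> psize (block \<rho> n i) < C_at n f Sigbar1 x" if "i < k" for i
    using block_of_consistent_padded_copies[OF \<rho>(1) x(1) that] small by simp
  then obtain Y P where YP: "\<And>i. i < k \<Longrightarrow> length (Y i) = n \<and> consistent (block \<rho> n i) (Y i) \<and>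
      (\<forall>e<c. P i e < n) \<and> forces n f (P i ` {..<c}) (Y i) (bit b i)"
    using ex_forcing_extensions[OF x c] by metis
  have "valid_ptr_term n k c f b P Y"
    using b(1) YP by (simp add: valid_ptr_term_def)
  moreover obtain z where z: "consistent \<rho> z" "consistent (ptr_term n k c b P Y) z"
  proof (rule consistent_common_extension)
    show "length \<rho> = length (ptr_term n k c b P Y)"
      using \<rho>(2) by simp
    show "\<forall>j<length \<rho>. \<rho> ! j = None \<or> ptr_term n k c b P Y ! j = None \<or> \<rho> ! j = ptr_term n k c b P Y ! j"
      using b(2) YP by (intro ptr_term_compatible[OF \<rho>(2)]) simp_all
  qed
  ultimately have "ptr_fun n k c f z"
    by (auto simp: ptr_fun_def ptr_terms_def)
  moreover have "length z = ptr_len n k c"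
    using z(1) \<rho>(2) by (simp add: consistent_def)
  ultimately show False
    using cert z(1) by (simp add: is_cert_def)
qed

lemma C0_ptr_fun_ge:
  assumes "0 < k" "length x = n" "f x = None" "C_total n f \<le> c"
  shows "min (C_at n f Sigbar0 x) (C_at n f Sigbar1 x) \<le> C0_total (ptr_len n k c) (ptr_fun n k c f)"
proof -
  let ?g = "\<lambda>z. Some (ptr_fun n k c f z)"
  have z0: "length (padded_copies n k c x) = ptr_len n k c" "?g (padded_copies n k c x) \<in> Sig0"
    using not_ptr_fun_padded_copies[of k x n f c] assms(1-3) by simp_all
  obtain \<rho> where \<rho>: "is_cert (ptr_len n k c) ?g Sig0 \<rho> (padded_copies n k c x)"
    "psize \<rho> = C_at (ptr_len n k c) ?g Sig0 (padded_copies n k c x)"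
    using C_at_minimal_cert[of "padded_copies n k c x" "ptr_len n k c" ?g Sig0] z0 by blast
  have "min (C_at n f Sigbar0 x) (C_at n f Sigbar1 x) \<le> psize \<rho>"
    using min_C_bar_le_psize_zero_cert[OF assms(2-4) \<rho>(1)] .
  also have "\<dots> \<le> C0_total (ptr_len n k c) (ptr_fun n k c f)"
    unfolding \<rho>(2) C0_total_def using z0 by (rule C_at_le_C_fun)
  finally show ?thesis .
qed

lemma ptr_len_le:
  assumes "c \<le> n"
  shows "ptr_len n k c \<le> 3 * n^2 * k^2"
proof -
  have "n * (k * c * k) \<le> n * (k * n * k)"
    using assms by simp
  moreover have "k * n \<le> n * (k * n * k)"
    using le_square[of "k * n"] by (simp add: algebra_simps)
  ultimately have "ptr_len n k c \<le> 2 * (n * (k * n * k))"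
    unfolding ptr_len_def by linarith
  then show ?thesis
    by (simp add: power2_eq_square algebra_simps)
qed

lemma ptr_width_le:
  fixes k c :: nat
  assumes "1 \<le> k"
  shows "k * c + k * c * k \<le> 3 * c * k^2"
proof -
  have "k * c * 1 \<le> k * c * k"
    using assms by (rule mult_le_mono2)
  then show ?thesis
    by (simp add: power2_eq_square algebra_simps)
qed

theorem theorem2p2:
  fixes n :: nat and f :: "bool list \<Rightarrow> bool option" and x :: "bool list"
  assumes "n \<ge> 2" and "\<exists>m::nat. n = 2 ^ m"
    and "length x = n" and "f x = None"
  shows "\<exists>(N::nat) (g :: bool list \<Rightarrow> bool).
           real N \<le> 3 * (real n)^2 * (log 2 (real n))^2 \<and>
           C0_total N g \<ge> min (C_at n f Sigbar0 x) (C_at n f Sigbar1 x) \<and>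
           real (UC1 N g) \<le> 3 * real (C_total n f) * (log 2 (real n))^2"
proof -
  obtain k where n: "n = 2 ^ k"
    using assms(2) by blast
  with assms(1) have k: "1 \<le> k"
    by (cases k) simp_all
  have log: "log 2 (real n) = real k"
    using n by (simp add: log_nat_power)
  define c where "c = C_total n f"
  have "c \<le> n"
    unfolding c_def C_total_def using C_fun_le_length[of n f] by simp
  then have "real (ptr_len n k c) \<le> real (3 * n^2 * k^2)"
    using ptr_len_le by (simp only: of_nat_le_iff)
  moreover have "min (C_at n f Sigbar0 x) (C_at n f Sigbar1 x) \<le> C0_total (ptr_len n k c) (ptr_fun n k c f)"
    using C0_ptr_fun_ge k assms(3,4) c_def by simp
  moreover have "real (UC1 (ptr_len n k c) (ptr_fun n k c f)) \<le> real (3 * c * k^2)"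
    using UC1_ptr_fun_le[OF n] ptr_width_le[OF k] by (simp only: of_nat_le_iff) (rule le_trans)
  ultimately show ?thesis
    unfolding log c_def by auto
qed

end
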